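(* Let $\mathcal{S}\subseteq 2^{[n]}$ be a Sperner family and $A\subseteq[n]$ a fixed set, and define $h_A:\mathcal{S}\to 2^{[n]}$ by $h_A(S)=S\cap A$. Then $\mathcal{F}=\mathcal{F}(\mathcal{S},h_A)$ is s-extremal and $\mathrm{Sh}(\mathcal{F})=\mathcal{H}(\mathcal{S})$.
   Context: $[n]=\{1,\dots,n\}$. A Sperner family is a family of sets none of which is contained in another. $\mathcal{F}$ shatters $S$ if $\{F\cap S:F\in\mathcal{F}\}=2^S$; $\mathrm{Sh}(\mathcal{F})$ is the family of shattered sets; $\mathcal{F}$ is s-extremal if $|\mathrm{Sh}(\mathcal{F})|=|\mathcal{F}|$. For $H\subseteq S\subseteq[n]$, $\mathcal{Q}_{S,H}=\{H\cup B: B\subseteq[n]\setminus S\}$. $\mathcal{H}(\mathcal{S})=\{F\subseteq[n]: \text{no } S\in\mathcal{S} \text{ satisfies } S\subseteq F\}$, and for $h:\mathcal{S}\to2^{[n]}$ with $h(S)\subseteq S$, $\mathcal{F}(\mathcal{S},h)=2^{[n]}\setminus\bigcup_{S\in\mathcal{S}}\mathcal{Q}_{S,h(S)}$. *)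

theory Defs
  imports Main
begin

definition sperner :: "'a set set \<Rightarrow> bool" where
  "sperner S \<longleftrightarrow> (\<forall>A\<in>S. \<forall>B\<in>S. A \<subseteq> B \<longrightarrow> A = B)"

definition shatters :: "'a set set \<Rightarrow> 'a set \<Rightarrow> bool" where
  "shatters F S \<longleftrightarrow> (\<lambda>X. X \<inter> S) ` F = Pow S"

definition Sh :: "nat \<Rightarrow> nat set set \<Rightarrow> nat set set" where
  "Sh n F = {S. S \<subseteq> {1..n} \<and> shatters F S}"

definition s_extremal :: "nat \<Rightarrow> nat set set \<Rightarrow> bool" where
  "s_extremal n F \<longleftrightarrow> card (Sh n F) = card F"

definition Q :: "nat \<Rightarrow> nat set \<Rightarrow> nat set \<Rightarrow> nat set set" where
  "Q n S H = {H \<union> B | B. B \<subseteq> {1..n} - S}"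

definition HS :: "nat \<Rightarrow> nat set set \<Rightarrow> nat set set" where
  "HS n \<S> = {F. F \<subseteq> {1..n} \<and> \<not> (\<exists>S\<in>\<S>. S \<subseteq> F)}"

definition FS :: "nat \<Rightarrow> nat set set \<Rightarrow> (nat set \<Rightarrow> nat set) \<Rightarrow> nat set set" where
  "FS n \<S> h = Pow {1..n} - (\<Union>S\<in>\<S>. Q n S (h S))"

end

theory Submission
  imports Defs
begin

text \<open>Taking the symmetric difference with \<open>[n] - A\<close> turns the condition \<open>X \<inter> S = S \<inter> A\<close>
  into \<open>S \<subseteq> X'\<close>, so this involution maps \<open>\<F>\<close> bijectively onto \<open>\<H>(\<S>)\<close>.
  Moreover a shattered set \<open>T\<close> cannot contain any \<open>S \<in> \<S>\<close>, since the trace \<open>S \<inter> A\<close>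
  on \<open>S\<close> is never realised; conversely, if \<open>T \<in> \<H>(\<S>)\<close>, every \<open>C \<subseteq> T\<close> is the trace
  of \<open>C \<union> ([n] - T - A) \<in> \<F>\<close>. Hence \<open>Sh(\<F>) = \<H>(\<S>)\<close> has the cardinality of \<open>\<F>\<close>.\<close>

lemma mem_Q_iff:
  assumes "H \<subseteq> S" "S \<subseteq> {1..n}"
  shows "X \<in> Q n S H \<longleftrightarrow> X \<subseteq> {1..n} \<and> X \<inter> S = H"
proof
  assume "X \<in> Q n S H"
  then obtain B where "B \<subseteq> {1..n} - S" "X = H \<union> B" unfolding Q_def by blast
  then show "X \<subseteq> {1..n} \<and> X \<inter> S = H" using assms by blast
next
  assume X: "X \<subseteq> {1..n} \<and> X \<inter> S = H"
  then have "X = H \<union> (X - S)" "X - S \<subseteq> {1..n} - S" by blast+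
  then show "X \<in> Q n S H" unfolding Q_def by blast
qed

lemma mem_FS_iff:
  assumes "\<S> \<subseteq> Pow {1..n}" "\<And>S. S \<in> \<S> \<Longrightarrow> h S \<subseteq> S"
  shows "X \<in> FS n \<S> h \<longleftrightarrow> X \<subseteq> {1..n} \<and> (\<forall>S\<in>\<S>. X \<inter> S \<noteq> h S)"
proof -
  have "X \<in> Q n S (h S) \<longleftrightarrow> X \<subseteq> {1..n} \<and> X \<inter> S = h S" if "S \<in> \<S>" for S
    using assms that by (intro mem_Q_iff) auto
  then show ?thesis unfolding FS_def by auto
qed

lemma mem_FS_trace_iff:
  assumes "\<S> \<subseteq> Pow {1..n}"
  shows "X \<in> FS n \<S> (\<lambda>S. S \<inter> A) \<longleftrightarrow> X \<subseteq> {1..n} \<and> (\<forall>S\<in>\<S>. X \<inter> S \<noteq> S \<inter> A)"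
  using assms by (rule mem_FS_iff) blast

lemma Sh_FS_subset_HS:
  assumes "\<S> \<subseteq> Pow {1..n}" "\<And>S. S \<in> \<S> \<Longrightarrow> h S \<subseteq> S"
  shows "Sh n (FS n \<S> h) \<subseteq> HS n \<S>"
proof
  fix T assume "T \<in> Sh n (FS n \<S> h)"
  then have T: "T \<subseteq> {1..n}" "(\<lambda>X. X \<inter> T) ` FS n \<S> h = Pow T"
    unfolding Sh_def shatters_def by auto
  have "\<not> S \<subseteq> T" if S: "S \<in> \<S>" for S
  proof
    assume "S \<subseteq> T"
    with assms(2)[OF S] have "h S \<in> (\<lambda>X. X \<inter> T) ` FS n \<S> h"
      unfolding T(2) by blast
    then obtain X where X: "X \<in> FS n \<S> h" and "h S = X \<inter> T" by blast
    with \<open>S \<subseteq> T\<close> assms(2)[OF S] have "X \<inter> S = h S" by blast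
    moreover from X S have "X \<inter> S \<noteq> h S" by (simp add: mem_FS_iff[OF assms])
    ultimately show False by contradiction
  qed
  with T(1) show "T \<in> HS n \<S>" unfolding HS_def by blast
qed

lemma HS_subset_Sh_FS_trace:
  assumes "\<S> \<subseteq> Pow {1..n}"
  shows "HS n \<S> \<subseteq> Sh n (FS n \<S> (\<lambda>S. S \<inter> A))"
proof
  fix T assume "T \<in> HS n \<S>"
  then have T: "T \<subseteq> {1..n}" "\<And>S. S \<in> \<S> \<Longrightarrow> \<not> S \<subseteq> T" unfolding HS_def by auto
  have "C \<in> (\<lambda>X. X \<inter> T) ` FS n \<S> (\<lambda>S. S \<inter> A)" if C: "C \<subseteq> T" for C
  proof
    show "C = (C \<union> ({1..n} - T - A)) \<inter> T" using C by blast
    have "(C \<union> ({1..n} - T - A)) \<inter> S \<noteq> S \<inter> A" if S: "S \<in> \<S>" for S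
    proof -
      obtain s where s: "s \<in> S" "s \<notin> T" using T(2)[OF S] by blast
      with S assms C have "s \<in> (C \<union> ({1..n} - T - A)) \<inter> S \<longleftrightarrow> s \<notin> S \<inter> A" by blast
      then show ?thesis by blast
    qed
    with C T(1) show "C \<union> ({1..n} - T - A) \<in> FS n \<S> (\<lambda>S. S \<inter> A)"
      unfolding mem_FS_trace_iff[OF assms] by blast
  qed
  then have "(\<lambda>X. X \<inter> T) ` FS n \<S> (\<lambda>S. S \<inter> A) = Pow T" by blast
  with T(1) show "T \<in> Sh n (FS n \<S> (\<lambda>S. S \<inter> A))" unfolding Sh_def shatters_def by blast
qed

lemma trace_eq_iff_subset_sym_diff:
  assumes "S \<subseteq> U"
  shows "X \<inter> S = S \<inter> A \<longleftrightarrow> S \<subseteq> sym_diff X (U - A)"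
proof -
  have "X \<inter> S = S \<inter> A \<longleftrightarrow> (\<forall>s\<in>S. s \<in> X \<longleftrightarrow> s \<in> A)" by blast
  also have "\<dots> \<longleftrightarrow> S \<subseteq> sym_diff X (U - A)" using assms by blast
  finally show ?thesis .
qed

lemma bij_betw_sym_diff_avoiding:
  assumes "D \<subseteq> U"
  shows "bij_betw (\<lambda>X. sym_diff X D)
           {X. X \<subseteq> U \<and> (\<forall>S\<in>\<S>. \<not> S \<subseteq> sym_diff X D)} {Y. Y \<subseteq> U \<and> (\<forall>S\<in>\<S>. \<not> S \<subseteq> Y)}"
    (is "bij_betw ?\<phi> ?F ?H")
proof -
  have involution: "?\<phi> (?\<phi> X) = X" for X by blast
  have within_ground: "?\<phi> X \<subseteq> U \<longleftrightarrow> X \<subseteq> U" for X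
    using assms by blast
  have "?\<phi> ` ?F \<subseteq> ?H" using within_ground by blast
  moreover have "?\<phi> ` ?H \<subseteq> ?F"
    using within_ground involution by (smt (verit) image_subset_iff mem_Collect_eq)
  ultimately show ?thesis
    using involution by (intro bij_betw_byWitness[where f' = ?\<phi>]) auto
qed

lemma bij_betw_FS_trace_HS:
  assumes "\<S> \<subseteq> Pow {1..n}"
  shows "bij_betw (\<lambda>X. sym_diff X ({1..n} - A)) (FS n \<S> (\<lambda>S. S \<inter> A)) (HS n \<S>)"
proof -
  have "X \<inter> S = S \<inter> A \<longleftrightarrow> S \<subseteq> sym_diff X ({1..n} - A)" if "S \<in> \<S>" for X S
    using that assms by (intro trace_eq_iff_subset_sym_diff) blast
  then have "FS n \<S> (\<lambda>S. S \<inter> A)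
      = {X. X \<subseteq> {1..n} \<and> (\<forall>S\<in>\<S>. \<not> S \<subseteq> sym_diff X ({1..n} - A))}"
    by (intro set_eqI) (simp add: mem_FS_trace_iff[OF assms])
  moreover have "HS n \<S> = {Y. Y \<subseteq> {1..n} \<and> (\<forall>S\<in>\<S>. \<not> S \<subseteq> Y)}"
    by (auto simp: HS_def)
  ultimately show ?thesis
    using bij_betw_sym_diff_avoiding[of "{1..n} - A" "{1..n}" \<S>] by simp
qed

theorem proposition14:
  fixes n :: nat and \<S> :: "nat set set" and A :: "nat set"
  assumes "\<S> \<subseteq> Pow {1..n}"
    and "sperner \<S>"
    and "A \<subseteq> {1..n}"
  shows "s_extremal n (FS n \<S> (\<lambda>S. S \<inter> A)) \<and> Sh n (FS n \<S> (\<lambda>S. S \<inter> A)) = HS n \<S>"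
proof -
  have "Sh n (FS n \<S> (\<lambda>S. S \<inter> A)) = HS n \<S>"
    using Sh_FS_subset_HS[OF assms(1), of "\<lambda>S. S \<inter> A"] HS_subset_Sh_FS_trace[OF assms(1)]
    by blast
  moreover have "card (FS n \<S> (\<lambda>S. S \<inter> A)) = card (HS n \<S>)"
    using bij_betw_same_card[OF bij_betw_FS_trace_HS[OF assms(1)]] .
  ultimately show ?thesis unfolding s_extremal_def by simp
qed

end
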